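(* Let $r_{\rm A}>0$, $\theta_{\rm A}\in\,]0,\pi/2[$, and let $0<x_{\rm B}<x_{\rm A}$ be defined by $x_{\rm A}+x_{\rm B}=2r_{\rm A}$, $x_{\rm A}-x_{\rm B}=2r_{\rm A}\cos\theta_{\rm A}$ (so that $\sqrt{x_{\rm B}/x_{\rm A}}=\tan(\theta_{\rm A}/2)$ and $\sqrt{x_{\rm A}x_{\rm B}}=r_{\rm A}\sin\theta_{\rm A}$). Define $$v_{\rm A}(\eta)=\frac{\eta-\sqrt{x_{\rm B}/x_{\rm A}}}{\sqrt{(x_{\rm A}+x_{\rm B})/2-\eta\sqrt{x_{\rm A}x_{\rm B}}}}.$$ Then $\eta\mapsto v_{\rm A}(\eta)$ is a bijection from $]-\infty,1[$ onto $]-\infty,v_E[$, $v_E=\sqrt{2/x_{\rm A}}$, and for every $\eta\in\,]-\infty,1[$: $$T_D^S(\eta)=T_D^R(v_{\rm A}(\eta)),\qquad H^S(\eta)=H^R(v_{\rm A}(\eta)),$$ where $H^S(\eta)=\dfrac{\eta^2-1}{2r_{\rm A}(1-\eta\sin\theta_{\rm A})}$ and $H^R(v)=\tfrac12v^2-\tfrac1{x_{\rm A}}$.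
   Context: Kepler problem normalized as $\ddot q=-q/|q|^3$, center ${\rm O}$ at the origin. $T_D^S(\eta)$ is the elapsed time of the direct Keplerian arc from ${\rm A}=(r_{\rm A}\cos\theta_{\rm A},r_{\rm A}\sin\theta_{\rm A})$ to ${\rm B}=(-r_{\rm A}\cos\theta_{\rm A},r_{\rm A}\sin\theta_{\rm A})$ lying on the conic $r=r_{\rm A}(1-\eta\sin\theta_{\rm A})/(1-\eta\sin\theta)$ (polar coordinates about ${\rm O}$), traversed with $\theta$ increasing from $\theta_{\rm A}$ to $\pi-\theta_{\rm A}$; explicitly $T_D^S(\eta)=\int_{\theta_{\rm A}}^{\pi-\theta_{\rm A}}r_{\rm A}^{3/2}(1-\eta\sin\theta_{\rm A})^{3/2}(1-\eta\sin\theta)^{-2}{\rm d}\theta$; $H^S(\eta)$ is its energy $|\dot q|^2/2-1/|q|$. $T_D^R(v)$, for $v<\sqrt{2/x_{\rm A}}$, is the first time after $t_{\rm A}$ (minus $t_{\rm A}$) at which the solution of $\ddot x=-1/x^2$ with $x(t_{\rm A})=x_{\rm A}$, $\dot x(t_{\rm A})=v$ reaches $x_{\rm B}$ (this happens before any collision with $0$); $H^R(v)$ is its energy. *)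

theory Defs
  imports "HOL-Analysis.Analysis"
begin

text \<open>Elapsed time of the direct Keplerian arc (explicit integral from the paper).\<close>
definition TDS :: "real \<Rightarrow> real \<Rightarrow> real \<Rightarrow> real" where
  "TDS rA thA eta = integral {thA..pi - thA}
     (\<lambda>th. rA powr (3/2) * (1 - eta * sin thA) powr (3/2) / (1 - eta * sin th)^2)"

definition HS :: "real \<Rightarrow> real \<Rightarrow> real \<Rightarrow> real" where
  "HS rA thA eta = (eta^2 - 1) / (2 * rA * (1 - eta * sin thA))"

text \<open>x solves x'' = -1/x^2 on [0,T] (time measured from t_A), x(0)=x0, x'(0)=v,
  staying positive (no collision).\<close>
definition radial_sol :: "real \<Rightarrow> real \<Rightarrow> real \<Rightarrow> (real \<Rightarrow> real) \<Rightarrow> bool" where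
  "radial_sol x0 v T x \<longleftrightarrow> 0 \<le> T \<and> x 0 = x0 \<and> (\<forall>t\<in>{0..T}. 0 < x t) \<and>
     (\<exists>x'. x' 0 = v \<and> (\<forall>t\<in>{0..T}. (x has_real_derivative x' t) (at t within {0..T}) \<and>
        (x' has_real_derivative (- 1 / (x t)^2)) (at t within {0..T})))"

definition TDR :: "real \<Rightarrow> real \<Rightarrow> real \<Rightarrow> real" where
  "TDR xA xB v = (THE T. \<exists>x. radial_sol xA v T x \<and> x T = xB \<and> (\<forall>t\<in>{0..<T}. x t \<noteq> xB))"

definition HR :: "real \<Rightarrow> real \<Rightarrow> real" where
  "HR xA v = v^2 / 2 - 1 / xA"

definition vA :: "real \<Rightarrow> real \<Rightarrow> real \<Rightarrow> real" where
  "vA xA xB eta = (eta - sqrt (xB / xA)) / sqrt ((xA + xB) / 2 - eta * sqrt (xA * xB))"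

end

theory Submission
  imports Defs "HOL-Complex_Analysis.Conformal_Mappings"
begin

text \<open>
  Write Q(z) = 1 + z^2 - 2 eta z and p = rA (1 - eta sin thA) = (xA + xB)/2 - eta sqrt (xA xB).
  Under theta = 2 arctan z the arc from A to B becomes t0 \<le> z \<le> 1/t0 with
  t0 = tan (thA/2) = sqrt (xB/xA), and TDS becomes the integral of 4 p^(3/2) / Q(z)^2, up to an
  exact term whose primitive -z/Q takes equal values at t0 and 1/t0.
  The same integral is the radial time: x = 2p/Q(z) with dz/dt = Q(z)^2 / (4 p^(3/2)) solves
  x'' = -1/x^2 with velocity (eta - z)/sqrt p and energy (eta^2 - 1)/(2p), starting at xA with
  velocity vA eta and reaching xB exactly at z = 1/t0; conversely, by energy conservation every
  radial solution with these initial data has this form, with z = eta - sqrt p x' increasing.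
  Finally vA eta = (d/w - w) / sqrt (xA xB), where d = (xA - xB)/2 and
  w = sqrt ((xA + xB)/2 - eta sqrt (xA xB)) decreases in eta, so vA is increasing; solving the
  quadratic for w shows that vA maps ]-\<infinity>, 1[ onto ]-\<infinity>, vA 1[ = ]-\<infinity>, sqrt (2/xA)[.
\<close>

section \<open>Radial Kepler motion in the variable z\<close>

definition kepler_quad :: "real \<Rightarrow> real \<Rightarrow> real" where
  "kepler_quad eta z = 1 + z^2 - 2 * eta * z"

text \<open>The time derivative dt/dz along the radial motion x = 2p/Q(z).\<close>

definition kepler_rate :: "real \<Rightarrow> real \<Rightarrow> real \<Rightarrow> real" where
  "kepler_rate p eta z = 4 * (p * sqrt p) / (kepler_quad eta z)^2"

lemma kepler_quad_pos:
  assumes "eta < 1" "0 \<le> z"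
  shows "0 < kepler_quad eta z"
proof (cases "eta \<le> 0")
  case True
  then have "eta * z \<le> 0"
    using assms by (simp add: mult_nonpos_nonneg)
  moreover have "0 \<le> z^2"
    by simp
  ultimately show ?thesis
    unfolding kepler_quad_def by linarith
next
  case False
  then have "eta^2 < 1"
    using assms by (simp add: abs_square_less_1)
  moreover have "kepler_quad eta z = (z - eta)^2 + (1 - eta^2)"
    by (simp add: kepler_quad_def power2_eq_square algebra_simps)
  ultimately show ?thesis
    by (metis add_nonneg_pos diff_gt_0_iff_gt zero_le_power2)
qed

lemma kepler_quad_less:
  assumes "z < b" "2 * eta < z + b"
  shows "kepler_quad eta z < kepler_quad eta b"
proof -
  have "kepler_quad eta b - kepler_quad eta z = (b - z) * (b + z - 2 * eta)"
    by (simp add: kepler_quad_def power2_eq_square algebra_simps)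
  also have "\<dots> > 0"
    using assms by simp
  finally show ?thesis by simp
qed

lemma kepler_quad_has_real_derivative:
  "(kepler_quad eta has_real_derivative 2 * z - 2 * eta) (at z)"
  unfolding kepler_quad_def[abs_def] by (auto intro!: derivative_eq_intros)

lemma kepler_quad_inverse:
  "z \<noteq> 0 \<Longrightarrow> kepler_quad eta (1 / z) = kepler_quad eta z / z^2"
  by (simp add: kepler_quad_def field_simps power2_eq_square)

lemma HR_kepler_iff:
  assumes "0 < p"
  shows "HR x ((eta - z) / sqrt p) = (eta^2 - 1) / (2 * p) \<longleftrightarrow> kepler_quad eta z = 2 * p / x"
proof -
  have "HR x ((eta - z) / sqrt p) - (eta^2 - 1) / (2 * p) = kepler_quad eta z / (2 * p) - 1 / x"
    using assms by (simp add: HR_def kepler_quad_def power_divide field_simps power2_eq_square)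
  then show ?thesis
    using assms by (auto simp: field_simps)
qed

lemma radial_sol_energy:
  assumes "radial_sol x0 v T x"
  obtains x' where "x' 0 = v"
    and "\<And>t. t \<in> {0..T} \<Longrightarrow> (x has_real_derivative x' t) (at t within {0..T})"
    and "\<And>t. t \<in> {0..T} \<Longrightarrow> (x' has_real_derivative - 1 / (x t)^2) (at t within {0..T})"
    and "\<And>t. t \<in> {0..T} \<Longrightarrow> HR (x t) (x' t) = HR x0 v"
proof -
  obtain x' where x'0: "x' 0 = v" and T: "0 \<le> T" and x0: "x 0 = x0"
    and pos: "\<And>t. t \<in> {0..T} \<Longrightarrow> 0 < x t"
    and dx: "\<And>t. t \<in> {0..T} \<Longrightarrow> (x has_real_derivative x' t) (at t within {0..T})"
    and dx': "\<And>t. t \<in> {0..T} \<Longrightarrow> (x' has_real_derivative - 1 / (x t)^2) (at t within {0..T})"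
    using assms unfolding radial_sol_def by blast
  have "((\<lambda>t. HR (x t) (x' t)) has_real_derivative 0) (at t within {0..T})"
    if "t \<in> {0..T}" for t
    unfolding HR_def
    by (rule derivative_eq_intros dx dx' that refl
        | use pos[OF that] in \<open>simp add: field_simps power2_eq_square\<close>)+
  then have "\<exists>E. \<forall>t\<in>{0..T}. HR (x t) (x' t) = E"
    by (rule has_field_derivative_zero_constant[OF convex_real_interval(5)])
  then obtain E where "\<And>t. t \<in> {0..T} \<Longrightarrow> HR (x t) (x' t) = E"
    by blast
  then have "HR (x t) (x' t) = HR x0 v" if "t \<in> {0..T}" for t
    using that T x0 x'0 by force
  with that x'0 dx dx' show thesis by blast
qed

lemma mono_on_if_has_real_derivative_nonneg:
  fixes f :: "real \<Rightarrow> real"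
  assumes "\<And>t. t \<in> {a..b} \<Longrightarrow> (f has_real_derivative f' t) (at t within {a..b})"
    and "\<And>t. t \<in> {a..b} \<Longrightarrow> 0 \<le> f' t"
  shows "mono_on {a..b} f"
proof (rule mono_onI)
  fix x y assume xy: "x \<in> {a..b}" "y \<in> {a..b}" "x \<le> y"
  show "f x \<le> f y"
  proof (rule DERIV_nonneg_imp_increasing_open[OF \<open>x \<le> y\<close>])
    fix s assume "x < s" "s < y"
    then have "s \<in> interior {a..b}"
      using xy by auto
    moreover have "s \<in> {a..b}"
      using xy \<open>x < s\<close> \<open>s < y\<close> by auto
    ultimately show "\<exists>d. (f has_real_derivative d) (at s) \<and> 0 \<le> d"
      using assms at_within_interior by metis
  next
    have "continuous_on {a..b} f"
      using assms(1) by (rule DERIV_continuous_on)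
    then show "continuous_on {x..y} f"
      by (rule continuous_on_subset) (use xy in auto)
  qed
qed

locale kepler_radial =
  fixes p eta :: real
  assumes p_pos: "0 < p" and eta_less_1: "eta < 1"
begin

text \<open>tau z is the time in which the motion x = 2p/Q(z) moves its variable from 0 to z.\<close>

definition tau :: "real \<Rightarrow> real" where
  "tau z = integral {0..z} (kepler_rate p eta)"

definition zeta :: "real \<Rightarrow> real" where
  "zeta = inv_into {0<..} tau"

lemma kepler_rate_pos: "0 \<le> z \<Longrightarrow> 0 < kepler_rate p eta z"
  using kepler_quad_pos[OF eta_less_1, of z] p_pos by (simp add: kepler_rate_def)

lemma continuous_on_kepler_rate: "continuous_on {0..} (kepler_rate p eta)"
proof -
  have "continuous_on {0..} (kepler_quad eta)"
    unfolding kepler_quad_def[abs_def] by (intro continuous_intros)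
  moreover have "kepler_quad eta z \<noteq> 0" if "z \<in> {0..}" for z
    using kepler_quad_pos[OF eta_less_1, of z] that by simp
  ultimately show ?thesis
    unfolding kepler_rate_def[abs_def] by (intro continuous_intros) auto
qed

lemma tau_has_real_derivative:
  assumes "0 < z"
  shows "(tau has_real_derivative kepler_rate p eta z) (at z)"
proof -
  have "continuous_on {0..z + 1} (kepler_rate p eta)"
    by (rule continuous_on_subset[OF continuous_on_kepler_rate]) auto
  then have "(tau has_real_derivative kepler_rate p eta z) (at z within {0..z + 1})"
    unfolding tau_def using assms by (intro integral_has_real_derivative) auto
  moreover have "at z within {0..z + 1} = at z"
    by (rule at_within_interior) (use assms in auto)
  ultimately show ?thesis by simp
qed

lemma continuous_on_tau: "continuous_on {0..b} tau"
  unfolding tau_def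
  by (intro indefinite_integral_continuous_1 integrable_continuous_real
      continuous_on_subset[OF continuous_on_kepler_rate]) auto

lemma strict_mono_on_tau: "strict_mono_on {0..} tau"
proof (rule strict_mono_onI)
  fix x y :: real assume "x \<in> {0..}" "y \<in> {0..}" "x < y"
  then have "0 \<le> x" by simp
  show "tau x < tau y"
  proof (rule DERIV_pos_imp_increasing_open[OF \<open>x < y\<close>])
    fix s assume "x < s" "s < y"
    then have "0 < s"
      using \<open>0 \<le> x\<close> by linarith
    then show "\<exists>d. (tau has_real_derivative d) (at s) \<and> 0 < d"
      using tau_has_real_derivative[of s] kepler_rate_pos[of s] by auto
  next
    show "continuous_on {x..y} tau"
      by (rule continuous_on_subset[OF continuous_on_tau[of y]]) (use \<open>0 \<le> x\<close> in auto)
  qed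
qed

lemma tau_diff:
  assumes "0 \<le> a" "a \<le> b"
  shows "tau b - tau a = integral {a..b} (kepler_rate p eta)"
proof -
  have "integral {0..a} (kepler_rate p eta) + integral {a..b} (kepler_rate p eta)
      = integral {0..b} (kepler_rate p eta)"
  proof (rule Henstock_Kurzweil_Integration.integral_combine)
    show "kepler_rate p eta integrable_on {0..b}"
      by (rule integrable_continuous_real, rule continuous_on_subset[OF continuous_on_kepler_rate]) auto
  qed (use assms in auto)
  then show ?thesis
    unfolding tau_def by simp
qed

lemma zeta_tau:
  assumes "0 < z"
  shows "zeta (tau z) = z"
proof -
  have "inj_on tau {0<..}"
    by (rule strict_mono_on_imp_inj_on, rule monotone_on_subset[OF strict_mono_on_tau]) auto
  then show ?thesis
    unfolding zeta_def using assms by (simp add: inv_into_f_f)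
qed

lemma zeta_has_real_derivative:
  assumes "0 < z"
  shows "(zeta has_real_derivative 1 / kepler_rate p eta z) (at (tau z))"
proof -
  have "continuous_on {0<..} tau"
    by (rule DERIV_continuous_on, rule has_field_derivative_at_within, rule tau_has_real_derivative) auto
  moreover have "kepler_rate p eta z \<noteq> 0"
    using kepler_rate_pos[of z] assms by simp
  ultimately have "(zeta has_real_derivative inverse (kepler_rate p eta z)) (at (tau z))"
    using assms zeta_tau
    by (intro has_field_derivative_inverse_strong[OF tau_has_real_derivative[OF assms], where S="{0<..}"])
      auto
  then show ?thesis
    by (simp add: inverse_eq_divide)
qed

text \<open>The initial energy is (eta^2 - 1)/(2p), which forces x = 2p/Q(z) for z = eta - sqrt p x'.\<close>

lemma radial_sol_kepler_formE:
  assumes "radial_sol (2 * p / kepler_quad eta a) ((eta - a) / sqrt p) T x" "0 \<le> a"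
  obtains z where "z 0 = a"
    and "\<And>t. t \<in> {0..T} \<Longrightarrow> x t = 2 * p / kepler_quad eta (z t)"
    and "\<And>t. t \<in> {0..T} \<Longrightarrow> (z has_real_derivative sqrt p / (x t)^2) (at t within {0..T})"
proof -
  have x_pos: "\<And>t. t \<in> {0..T} \<Longrightarrow> 0 < x t"
    using assms(1) unfolding radial_sol_def by auto
  obtain x' where x'0: "x' 0 = (eta - a) / sqrt p"
    and dx': "\<And>t. t \<in> {0..T} \<Longrightarrow> (x' has_real_derivative - 1 / (x t)^2) (at t within {0..T})"
    and energy: "\<And>t. t \<in> {0..T} \<Longrightarrow>
      HR (x t) (x' t) = HR (2 * p / kepler_quad eta a) ((eta - a) / sqrt p)"
    using radial_sol_energy[OF assms(1)] by metis
  define z where "z t = eta - sqrt p * x' t" for t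
  have "z 0 = a"
    unfolding z_def x'0 using p_pos by simp
  moreover have "x t = 2 * p / kepler_quad eta (z t)" if t: "t \<in> {0..T}" for t
  proof -
    have "x' t = (eta - z t) / sqrt p"
      unfolding z_def using p_pos by simp
    moreover have "HR (2 * p / kepler_quad eta a) ((eta - a) / sqrt p) = (eta^2 - 1) / (2 * p)"
      using HR_kepler_iff[OF p_pos, of "2 * p / kepler_quad eta a" eta a]
        kepler_quad_pos[OF eta_less_1 assms(2)] p_pos by simp
    ultimately have "HR (x t) ((eta - z t) / sqrt p) = (eta^2 - 1) / (2 * p)"
      using energy[OF t] by simp
    then have "kepler_quad eta (z t) = 2 * p / x t"
      using HR_kepler_iff[OF p_pos] by blast
    then show ?thesis
      using x_pos[OF t] p_pos by simp
  qed
  moreover have "(z has_real_derivative sqrt p / (x t)^2) (at t within {0..T})" if "t \<in> {0..T}" for t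
    unfolding z_def[abs_def] by (rule derivative_eq_intros dx'[OF that] refl | simp)+
  ultimately show thesis
    using that by blast
qed

end

text \<open>The condition 2 eta < a + b makes Q increase on [a, b], so the motion reaches 2p/Q(b) only once.\<close>

locale kepler_arc = kepler_radial +
  fixes a b :: real
  assumes a_pos: "0 < a" and a_less_b: "a < b" and eta_less_mid: "2 * eta < a + b"
begin

lemma kepler_quad_eq_iff:
  assumes "a \<le> z"
  shows "kepler_quad eta z = kepler_quad eta b \<longleftrightarrow> z = b"
  using kepler_quad_less[of z b eta] kepler_quad_less[of b z eta] eta_less_mid assms
  by (cases z b rule: linorder_cases) auto

lemma reaches_b_iff:
  assumes "a \<le> z" "tau z = tau a + t"
  shows "2 * p / kepler_quad eta z = 2 * p / kepler_quad eta b \<longleftrightarrow> t = tau b - tau a"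
proof -
  have "2 * p / kepler_quad eta z = 2 * p / kepler_quad eta b \<longleftrightarrow> z = b"
    using p_pos kepler_quad_eq_iff[OF assms(1)] by (simp add: divide_cancel_left)
  also have "\<dots> \<longleftrightarrow> tau z = tau b"
    using strict_mono_on_eq[OF strict_mono_on_tau] a_pos a_less_b assms(1) by simp
  finally show ?thesis
    using assms(2) by linarith
qed

definition anomaly :: "real \<Rightarrow> real" where
  "anomaly t = zeta (tau a + t)"

lemma anomaly_in_arc:
  assumes "t \<in> {0..tau b - tau a}"
  shows "anomaly t \<in> {a..b}" and "tau (anomaly t) = tau a + t"
proof -
  have "continuous_on {a..b} tau"
    by (rule continuous_on_subset[OF continuous_on_tau[of b]]) (use a_pos in auto)
  then obtain z where z: "a \<le> z" "z \<le> b" "tau z = tau a + t"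
    using IVT'[of tau a "tau a + t" b] a_less_b assms by auto
  then have "anomaly t = z"
    unfolding anomaly_def using zeta_tau a_pos by (metis order_less_le_trans)
  with z show "anomaly t \<in> {a..b}" "tau (anomaly t) = tau a + t"
    by auto
qed

lemma anomaly_has_real_derivative:
  assumes "t \<in> {0..tau b - tau a}"
  shows "(anomaly has_real_derivative 1 / kepler_rate p eta (anomaly t)) (at t)"
proof -
  have "0 < anomaly t"
    using anomaly_in_arc(1)[OF assms] a_pos by auto
  then have "(zeta has_real_derivative 1 / kepler_rate p eta (anomaly t)) (at (tau a + t))"
    using zeta_has_real_derivative anomaly_in_arc(2)[OF assms] by metis
  then have "((\<lambda>t. zeta (tau a + t)) has_real_derivative 1 / kepler_rate p eta (anomaly t) * 1) (at t)"
    by (rule DERIV_chain2) (auto intro!: derivative_eq_intros)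
  then show ?thesis
    unfolding anomaly_def[abs_def] by simp
qed

lemma radial_sol_anomaly:
  "radial_sol (2 * p / kepler_quad eta a) ((eta - a) / sqrt p) (tau b - tau a)
     (\<lambda>t. 2 * p / kepler_quad eta (anomaly t))"
  unfolding radial_sol_def
proof (intro conjI ballI exI[of _ "\<lambda>t. (eta - anomaly t) / sqrt p"])
  have "anomaly 0 = a"
    unfolding anomaly_def using zeta_tau a_pos by simp
  then show "2 * p / kepler_quad eta (anomaly 0) = 2 * p / kepler_quad eta a"
    and "(eta - anomaly 0) / sqrt p = (eta - a) / sqrt p"
    by simp_all
  show "0 \<le> tau b - tau a"
    using strict_mono_onD[OF strict_mono_on_tau, of a b] a_pos a_less_b by simp
  fix t assume t: "t \<in> {0..tau b - tau a}"
  have Q: "0 < kepler_quad eta (anomaly t)"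
    using kepler_quad_pos[OF eta_less_1] anomaly_in_arc(1)[OF t] a_pos by simp
  then show "0 < 2 * p / kepler_quad eta (anomaly t)"
    using p_pos by simp
  have p: "sqrt p * sqrt p = p"
    using p_pos by simp
  note dz = anomaly_has_real_derivative[OF t]
  have dQ: "((\<lambda>t. kepler_quad eta (anomaly t)) has_real_derivative
      (2 * anomaly t - 2 * eta) * (1 / kepler_rate p eta (anomaly t))) (at t)"
    by (rule DERIV_chain2[OF kepler_quad_has_real_derivative dz])
  have "((\<lambda>t. 2 * p / kepler_quad eta (anomaly t)) has_real_derivative (eta - anomaly t) / sqrt p) (at t)"
    by (rule derivative_eq_intros dQ refl)+
      (use Q p p_pos in \<open>simp_all add: kepler_rate_def field_simps power2_eq_square\<close>)
  then show "((\<lambda>t. 2 * p / kepler_quad eta (anomaly t)) has_real_derivative (eta - anomaly t) / sqrt p)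
      (at t within {0..tau b - tau a})"
    by (rule has_field_derivative_at_within)
  have "((\<lambda>t. (eta - anomaly t) / sqrt p) has_real_derivative
      - 1 / (2 * p / kepler_quad eta (anomaly t))^2) (at t)"
    by (rule derivative_eq_intros dz refl)+
      (use Q p p_pos in \<open>simp_all add: kepler_rate_def field_simps power2_eq_square\<close>)
  then show "((\<lambda>t. (eta - anomaly t) / sqrt p) has_real_derivative
      - 1 / (2 * p / kepler_quad eta (anomaly t))^2) (at t within {0..tau b - tau a})"
    by (rule has_field_derivative_at_within)
qed

lemma radial_sol_anomalyE:
  assumes "radial_sol (2 * p / kepler_quad eta a) ((eta - a) / sqrt p) T x"
  obtains z where "\<And>t. t \<in> {0..T} \<Longrightarrow>
    a \<le> z t \<and> tau (z t) = tau a + t \<and> x t = 2 * p / kepler_quad eta (z t)"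
proof -
  obtain z where z0: "z 0 = a"
    and x_z: "\<And>t. t \<in> {0..T} \<Longrightarrow> x t = 2 * p / kepler_quad eta (z t)"
    and dz: "\<And>t. t \<in> {0..T} \<Longrightarrow> (z has_real_derivative sqrt p / (x t)^2) (at t within {0..T})"
    using radial_sol_kepler_formE[OF assms] a_pos by (metis less_imp_le)
  have T: "0 \<le> T"
    using assms unfolding radial_sol_def by simp
  have "mono_on {0..T} z"
    by (rule mono_on_if_has_real_derivative_nonneg[OF dz]) (use p_pos in auto)
  then have z_ge: "a \<le> z t" if "t \<in> {0..T}" for t
    using z0 T that by (metis atLeastAtMost_iff mono_onD order_refl)
  have "((\<lambda>t. tau (z t) - t) has_real_derivative 0) (at t within {0..T})" if t: "t \<in> {0..T}" for t
  proof -
    have "0 < z t"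
      using z_ge[OF t] a_pos by simp
    then have "((\<lambda>t. tau (z t)) has_real_derivative
        kepler_rate p eta (z t) * (sqrt p / (x t)^2)) (at t within {0..T})"
      by (rule DERIV_chain2[OF tau_has_real_derivative dz[OF t]])
    then have D: "((\<lambda>t. tau (z t) - t) has_real_derivative
        kepler_rate p eta (z t) * (sqrt p / (x t)^2) - 1) (at t within {0..T})"
      by (rule DERIV_diff[OF _ DERIV_ident])
    have E: "kepler_rate p eta (z t) * (sqrt p / (x t)^2) = 1"
      using x_z[OF t] p_pos kepler_quad_pos[OF eta_less_1, of "z t"] \<open>0 < z t\<close>
      by (simp add: kepler_rate_def field_simps power2_eq_square)
    show ?thesis
      using D unfolding E by simp
  qed
  then have "\<exists>c. \<forall>t\<in>{0..T}. tau (z t) - t = c"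
    by (rule has_field_derivative_zero_constant[OF convex_real_interval(5)])
  then obtain c where c: "\<And>t. t \<in> {0..T} \<Longrightarrow> tau (z t) - t = c"
    by blast
  have "c = tau a"
    using c[of 0] T z0 by simp
  then have "tau (z t) = tau a + t" if "t \<in> {0..T}" for t
    using c[OF that] by linarith
  with z_ge x_z show thesis
    using that by blast
qed

lemma TDR_eq_integral:
  "TDR (2 * p / kepler_quad eta a) (2 * p / kepler_quad eta b) ((eta - a) / sqrt p)
     = integral {a..b} (kepler_rate p eta)"
proof -
  let ?xa = "2 * p / kepler_quad eta a" and ?xb = "2 * p / kepler_quad eta b"
    and ?v = "(eta - a) / sqrt p" and ?T = "tau b - tau a"
  have "TDR ?xa ?xb ?v = ?T"
    unfolding TDR_def
  proof (rule the_equality)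
    let ?x = "\<lambda>t. 2 * p / kepler_quad eta (anomaly t)"
    have "?x t = ?xb \<longleftrightarrow> t = ?T" if "t \<in> {0..?T}" for t
      using reaches_b_iff anomaly_in_arc[OF that] by auto
    moreover have "0 \<le> ?T"
      using radial_sol_anomaly unfolding radial_sol_def by blast
    ultimately show "\<exists>x. radial_sol ?xa ?v ?T x \<and> x ?T = ?xb \<and> (\<forall>t\<in>{0..<?T}. x t \<noteq> ?xb)"
      using radial_sol_anomaly by (intro exI[of _ ?x]) auto
  next
    fix T assume "\<exists>x. radial_sol ?xa ?v T x \<and> x T = ?xb \<and> (\<forall>t\<in>{0..<T}. x t \<noteq> ?xb)"
    then obtain x where x: "radial_sol ?xa ?v T x" and xT: "x T = ?xb"
      by blast
    obtain z where z: "\<And>t. t \<in> {0..T} \<Longrightarrow>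
        a \<le> z t \<and> tau (z t) = tau a + t \<and> x t = 2 * p / kepler_quad eta (z t)"
      using radial_sol_anomalyE[OF x] by blast
    have "T \<in> {0..T}"
      using x unfolding radial_sol_def by simp
    then show "T = ?T"
      using z reaches_b_iff xT by metis
  qed
  also have "\<dots> = integral {a..b} (kepler_rate p eta)"
    using tau_diff a_pos a_less_b by simp
  finally show ?thesis .
qed

end

section \<open>The time along the conic\<close>

lemma has_integral_tan_half_substitution:
  fixes f :: "real \<Rightarrow> real"
  assumes "a \<le> b" and "continuous_on {2 * arctan a..2 * arctan b} f"
  shows "((\<lambda>z. 2 / (1 + z^2) * f (2 * arctan z)) has_integral
           integral {2 * arctan a..2 * arctan b} f) {a..b}"
proof -
  have "((\<lambda>z. (2 / (1 + z^2)) *\<^sub>R f (2 * arctan z)) has_integral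
           integral {2 * arctan a..2 * arctan b} f) {a..b}"
  proof (rule has_integral_substitution[where g="\<lambda>z. 2 * arctan z" and g'="\<lambda>z. 2 / (1 + z^2)"])
    show "2 * arctan a \<le> 2 * arctan b"
      using arctan_monotone'[OF assms(1)] by simp
    show "(\<lambda>z. 2 * arctan z) ` {a..b} \<subseteq> {2 * arctan a..2 * arctan b}"
      using arctan_monotone' by fastforce
    show "((\<lambda>z. 2 * arctan z) has_real_derivative 2 / (1 + x^2)) (at x within {a..b})" for x
      by (auto intro!: derivative_eq_intros simp: field_simps)
  qed (use assms in auto)
  then show ?thesis
    by simp
qed

lemma sin_double_arctan: "sin (2 * arctan z) = 2 * z / (1 + z^2)"
proof -
  have "sin (2 * arctan z) = 2 * z / (sqrt (1 + z^2) * sqrt (1 + z^2))"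
    by (simp add: sin_double sin_arctan cos_arctan)
  also have "\<dots> = 2 * z / (1 + z^2)"
    by (simp add: add_pos_nonneg)
  finally show ?thesis .
qed

lemma double_arctan_tan_half:
  assumes "0 < th" "th < pi"
  shows "2 * arctan (tan (th / 2)) = th" and "2 * arctan (1 / tan (th / 2)) = pi - th"
proof -
  show *: "2 * arctan (tan (th / 2)) = th"
    using assms by (simp add: arctan_tan)
  have "0 < tan (th / 2)"
    using assms by (intro tan_gt_zero) auto
  then have "arctan (1 / tan (th / 2)) = pi / 2 - arctan (tan (th / 2))"
    using arctan_inverse[of "tan (th / 2)"] by (simp add: inverse_eq_divide)
  then show "2 * arctan (1 / tan (th / 2)) = pi - th"
    using * by simp
qed

text \<open>The primitive -z/Q(z) takes the same value at a and 1/a.\<close>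

lemma has_integral_kepler_quad_antisymmetric:
  assumes "eta < 1" "0 < a" "a \<le> 1"
  shows "((\<lambda>z. (z^2 - 1) / (kepler_quad eta z)^2) has_integral 0) {a..1 / a}"
proof -
  have Q: "kepler_quad eta z \<noteq> 0" if "z \<in> {a..1 / a}" for z
    using kepler_quad_pos[OF assms(1), of z] that assms(2) by simp
  have "((\<lambda>z. (z^2 - 1) / (kepler_quad eta z)^2) has_integral
      (- (1 / a) / kepler_quad eta (1 / a)) - (- a / kepler_quad eta a)) {a..1 / a}"
  proof (rule fundamental_theorem_of_calculus)
    show "a \<le> 1 / a"
      using assms by (simp add: field_simps) (metis less_eq_real_def mult_le_one)
    fix z assume z: "z \<in> {a..1 / a}"
    have "((\<lambda>z. - z / kepler_quad eta z) has_real_derivative (z^2 - 1) / (kepler_quad eta z)^2)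
        (at z within {a..1 / a})"
      by (rule derivative_eq_intros has_field_derivative_at_within[OF kepler_quad_has_real_derivative]
          refl)+
        (use Q[OF z] in \<open>simp_all add: kepler_quad_def divide_simps power2_eq_square, algebra\<close>)
    then show "((\<lambda>z. - z / kepler_quad eta z) has_vector_derivative (z^2 - 1) / (kepler_quad eta z)^2)
        (at z within {a..1 / a})"
      by (simp add: has_real_derivative_iff_has_vector_derivative)
  qed
  moreover have "- (1 / a) / kepler_quad eta (1 / a) = - a / kepler_quad eta a"
    using assms(2) by (simp add: kepler_quad_inverse field_simps power2_eq_square)
  ultimately show ?thesis
    by simp
qed

lemma powr_three_halves:
  assumes "0 \<le> x"
  shows "x powr (3/2) = x * sqrt x"
  using powr_add[of x 1 "1/2"] powr_half_sqrt[OF assms] assms by simp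

lemma tan_half_bounds:
  assumes "0 < th" "th < pi / 2"
  shows "0 < tan (th / 2)" "tan (th / 2) < 1"
  using assms tan_monotone[of "th / 2" "pi / 4"] tan_45 by (auto intro: tan_gt_zero)

lemma tan_half_substitution_kepler:
  "2 / (1 + z^2) * (P / (1 - eta * sin (2 * arctan z))^2)
     = 2 * P * (1 + z^2) / (kepler_quad eta z)^2"
proof -
  have z: "1 + z^2 \<noteq> 0"
    using add_pos_nonneg[OF zero_less_one zero_le_power2[of z]] by simp
  then have "1 - eta * sin (2 * arctan z) = kepler_quad eta z / (1 + z^2)"
    unfolding sin_double_arctan kepler_quad_def by (simp add: field_simps)
  then have "2 / (1 + z^2) * (P / (1 - eta * sin (2 * arctan z))^2)
      = 2 / (1 + z^2) * (P * (1 + z^2)^2 / (kepler_quad eta z)^2)"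
    by (simp add: power_divide)
  also have "\<dots> = 2 * P * (1 + z^2) / (kepler_quad eta z)^2"
    using z by (simp add: power2_eq_square)
  finally show ?thesis .
qed

lemma TDS_has_integral_tan_half:
  assumes "0 < rA" "0 < thA" "thA < pi / 2" "eta < 1"
  defines "p \<equiv> rA * (1 - eta * sin thA)" and "t0 \<equiv> tan (thA / 2)"
  shows "((\<lambda>z. 2 * (p * sqrt p) * (1 + z^2) / (kepler_quad eta z)^2) has_integral TDS rA thA eta)
    {t0..1 / t0}"
proof -
  have sin_less: "eta * sin th < 1" if "th \<in> {0..pi}" for th
  proof -
    have "0 \<le> sin th" "sin th \<le> 1"
      using that by (auto intro: sin_ge_zero)
    then show ?thesis
      using assms(4) by (cases "eta \<le> 0") (auto intro: order_le_less_trans[OF mult_nonpos_nonneg]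
        order_le_less_trans[OF mult_left_le])
  qed
  define f where "f th = rA powr (3/2) * (1 - eta * sin thA) powr (3/2) / (1 - eta * sin th)^2" for th
  have "1 - eta * sin th \<noteq> 0" if "th \<in> {thA..pi - thA}" for th
    using sin_less[of th] that assms by auto
  then have "continuous_on {thA..pi - thA} f"
    unfolding f_def by (intro continuous_intros) auto
  moreover have "t0 \<le> 1 / t0"
    using tan_half_bounds[OF assms(2,3)] unfolding t0_def
    by (simp add: field_simps) (metis less_eq_real_def mult_le_one)
  moreover have "2 * arctan t0 = thA" "2 * arctan (1 / t0) = pi - thA"
    unfolding t0_def using double_arctan_tan_half[of thA] assms by simp_all
  moreover have "TDS rA thA eta = integral {thA..pi - thA} f"
    unfolding TDS_def f_def ..
  ultimately have I: "((\<lambda>z. 2 / (1 + z^2) * f (2 * arctan z)) has_integral TDS rA thA eta)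
      {t0..1 / t0}"
    using has_integral_tan_half_substitution[of t0 "1 / t0" f] by simp
  have f: "f th = p * sqrt p / (1 - eta * sin th)^2" for th
    unfolding f_def p_def using assms sin_less[of thA]
    by (simp add: powr_mult[symmetric] powr_three_halves real_sqrt_mult)
  show ?thesis
    using I unfolding f tan_half_substitution_kepler .
qed

lemma TDS_eq_integral_kepler_rate:
  assumes "0 < rA" "0 < thA" "thA < pi / 2" "eta < 1"
  shows "TDS rA thA eta =
    integral {tan (thA / 2)..1 / tan (thA / 2)} (kepler_rate (rA * (1 - eta * sin thA)) eta)"
proof -
  define t0 where "t0 = tan (thA / 2)"
  define P where "P = 2 * (rA * (1 - eta * sin thA) * sqrt (rA * (1 - eta * sin thA)))"
  have "((\<lambda>z. (z^2 - 1) / (kepler_quad eta z)^2 * P) has_integral 0 * P) {t0..1 / t0}"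
    using tan_half_bounds[OF assms(2,3)] unfolding t0_def
    by (intro has_integral_mult_left has_integral_kepler_quad_antisymmetric[OF assms(4)]) simp_all
  with TDS_has_integral_tan_half[OF assms]
  have "((\<lambda>z. P * (1 + z^2) / (kepler_quad eta z)^2 - (z^2 - 1) / (kepler_quad eta z)^2 * P)
      has_integral TDS rA thA eta - 0 * P) {t0..1 / t0}"
    unfolding t0_def P_def by (intro has_integral_diff) simp_all
  moreover have "(\<lambda>z. P * (1 + z^2) / (kepler_quad eta z)^2 - (z^2 - 1) / (kepler_quad eta z)^2 * P)
      = kepler_rate (rA * (1 - eta * sin thA)) eta"
    unfolding P_def kepler_rate_def
    by (rule ext) (simp add: diff_divide_distrib[symmetric] algebra_simps)
  ultimately show ?thesis
    unfolding t0_def by (simp add: integral_unique)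
qed

section \<open>The initial velocity vA\<close>

lemma divide_minus_strict_antimono:
  fixes d u w :: real
  assumes "0 \<le> d" "0 < u" "u < w"
  shows "d / w - w < d / u - u"
proof -
  have "d / w \<le> d / u"
    using assms by (intro divide_left_mono) auto
  then show ?thesis
    using assms(3) by linarith
qed

lemma divide_minus_surj:
  fixes d k :: real
  assumes "0 < d"
  obtains w where "0 < w" "d / w - w = k"
proof -
  define w where "w = (sqrt (k^2 + 4 * d) - k) / 2"
  have "\<bar>k\<bar> < sqrt (k^2 + 4 * d)"
    using assms by (intro real_less_rsqrt) simp
  then have "0 < w"
    unfolding w_def by (simp add: abs_less_iff)
  have "(sqrt (k^2 + 4 * d))^2 = k^2 + 4 * d"
    using assms by (intro real_sqrt_pow2) (simp add: add_nonneg_pos)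
  then have "w * w + k * w = d"
    unfolding w_def by (simp add: power2_eq_square field_simps)
  then have "d / w - w = k"
    using \<open>0 < w\<close> by (simp add: field_simps)
  with \<open>0 < w\<close> show thesis
    using that by blast
qed

lemma vA_eq_divide_minus:
  assumes "0 < xA" "0 < xB" and P: "0 < (xA + xB) / 2 - eta * sqrt (xA * xB)"
  defines "w \<equiv> sqrt ((xA + xB) / 2 - eta * sqrt (xA * xB))"
  shows "vA xA xB eta = ((xA - xB) / 2 / w - w) / sqrt (xA * xB)"
proof -
  have m: "0 < sqrt (xA * xB)"
    using assms by simp
  have "0 < w"
    unfolding w_def using P by simp
  have "sqrt (xB / xA) * sqrt (xA * xB) = sqrt (xB^2)"
    unfolding real_sqrt_mult[symmetric] using assms by (simp add: power2_eq_square)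
  then have "sqrt (xB / xA) * sqrt (xA * xB) = xB"
    using assms by simp
  moreover have "w^2 = (xA + xB) / 2 - eta * sqrt (xA * xB)"
    unfolding w_def using P by simp
  ultimately have "(eta - sqrt (xB / xA)) * sqrt (xA * xB) = (xA - xB) / 2 - w^2"
    by (simp add: left_diff_distrib) (simp add: field_simps)
  then have "eta - sqrt (xB / xA) = ((xA - xB) / 2 - w^2) / sqrt (xA * xB)"
    using assms(1,2) by (simp add: eq_divide_eq)
  then show ?thesis
    unfolding vA_def w_def[symmetric] using m \<open>0 < w\<close>
    by (simp add: field_simps power2_eq_square)
qed

lemma strict_mono_on_vA:
  assumes "0 < xB" "xB \<le> xA"
  shows "strict_mono_on {eta. 0 < (xA + xB) / 2 - eta * sqrt (xA * xB)} (vA xA xB)"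
proof (rule strict_mono_onI)
  fix e1 e2 assume e: "e1 \<in> {eta. 0 < (xA + xB) / 2 - eta * sqrt (xA * xB)}"
    "e2 \<in> {eta. 0 < (xA + xB) / 2 - eta * sqrt (xA * xB)}" "e1 < e2"
  have m: "0 < sqrt (xA * xB)"
    using assms by simp
  have "sqrt ((xA + xB) / 2 - e2 * sqrt (xA * xB)) < sqrt ((xA + xB) / 2 - e1 * sqrt (xA * xB))"
    using e m by simp
  then have "(xA - xB) / 2 / sqrt ((xA + xB) / 2 - e1 * sqrt (xA * xB)) - sqrt ((xA + xB) / 2 - e1 * sqrt (xA * xB))
      < (xA - xB) / 2 / sqrt ((xA + xB) / 2 - e2 * sqrt (xA * xB)) - sqrt ((xA + xB) / 2 - e2 * sqrt (xA * xB))"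
    using e assms by (intro divide_minus_strict_antimono) auto
  then show "vA xA xB e1 < vA xA xB e2"
    using e assms m by (simp add: vA_eq_divide_minus divide_strict_right_mono)
qed

lemma vA_one:
  assumes "0 < xB" "xB < xA"
  shows "vA xA xB 1 = sqrt (2 / xA)"
proof -
  define a b where "a = sqrt xA" and "b = sqrt xB"
  have ab: "0 < b" "b < a"
    unfolding a_def b_def using assms by simp_all
  have xA: "xA = a^2" and xB: "xB = b^2"
    unfolding a_def b_def using assms by simp_all
  have "(xA + xB) / 2 - sqrt (xA * xB) = (a - b)^2 / 2"
    unfolding xA xB using ab by (simp add: real_sqrt_mult power2_eq_square algebra_simps)
  then have "sqrt ((xA + xB) / 2 - sqrt (xA * xB)) = sqrt ((a - b)^2 / 2)"
    by (simp only:)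
  also have "\<dots> = (a - b) / sqrt 2"
    using ab by (simp add: real_sqrt_divide)
  finally have den: "sqrt ((xA + xB) / 2 - 1 * sqrt (xA * xB)) = (a - b) / sqrt 2"
    by simp
  have ratios: "sqrt (xB / xA) = b / a" "sqrt (2 / xA) = sqrt 2 / a"
    unfolding xA xB using ab by (simp_all add: real_sqrt_divide)
  show ?thesis
    unfolding vA_def den ratios using ab by (simp add: field_simps)
qed

lemma sqrt_mult_less_mean:
  fixes x y :: real
  assumes "0 \<le> x" "0 \<le> y" "x \<noteq> y"
  shows "sqrt (x * y) < (x + y) / 2"
proof -
  have "0 < (sqrt x - sqrt y)^2"
    using assms by simp
  then show ?thesis
    using assms by (simp add: real_sqrt_mult power2_eq_square algebra_simps)
qed

lemma atMost_1_subset_vA_domain: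
  assumes "0 < xB" "xB < xA"
  shows "{..1} \<subseteq> {eta. 0 < (xA + xB) / 2 - eta * sqrt (xA * xB)}"
proof
  fix x :: real assume "x \<in> {..1}"
  moreover have "0 < sqrt (xA * xB)"
    using assms by simp
  ultimately have "x * sqrt (xA * xB) \<le> sqrt (xA * xB)"
    using mult_right_mono[of x 1 "sqrt (xA * xB)"] by simp
  moreover have "sqrt (xA * xB) < (xA + xB) / 2"
    using sqrt_mult_less_mean[of xA xB] assms by simp
  ultimately show "x \<in> {eta. 0 < (xA + xB) / 2 - eta * sqrt (xA * xB)}"
    by simp
qed

lemma vA_surj:
  assumes "0 < xB" "xB < xA" "y < sqrt (2 / xA)"
  obtains eta where "eta < 1" "vA xA xB eta = y"
proof -
  define S where "S = {eta. 0 < (xA + xB) / 2 - eta * sqrt (xA * xB)}"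
  have m: "0 < sqrt (xA * xB)"
    using assms by simp
  obtain w where w: "0 < w" "(xA - xB) / 2 / w - w = y * sqrt (xA * xB)"
    using divide_minus_surj[of "(xA - xB) / 2" "y * sqrt (xA * xB)"] assms by auto
  define eta where "eta = ((xA + xB) / 2 - w^2) / sqrt (xA * xB)"
  have "eta * sqrt (xA * xB) = (xA + xB) / 2 - w^2"
    unfolding eta_def using m assms by auto
  then have P: "(xA + xB) / 2 - eta * sqrt (xA * xB) = w^2"
    by simp
  then have "eta \<in> S"
    unfolding S_def mem_Collect_eq P using w by simp
  have "vA xA xB eta = y"
    using vA_eq_divide_minus[of xA xB eta] assms m w P by simp
  moreover have "eta < 1"
  proof (rule ccontr)
    assume "\<not> eta < 1"
    moreover have "strict_mono_on S (vA xA xB)"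
      unfolding S_def using strict_mono_on_vA assms by simp
    moreover have "{..1} \<subseteq> S"
      using atMost_1_subset_vA_domain[OF assms(1,2)] unfolding S_def .
    ultimately have "vA xA xB 1 \<le> vA xA xB eta"
      using strict_mono_on_leD \<open>eta \<in> S\<close> by fastforce
    then show False
      using assms vA_one \<open>vA xA xB eta = y\<close> by simp
  qed
  ultimately show thesis
    using that by blast
qed

lemma bij_betw_vA:
  assumes "0 < xB" "xB < xA"
  shows "bij_betw (vA xA xB) {..<1} {..<sqrt (2 / xA)}"
proof -
  define S where "S = {eta. 0 < (xA + xB) / 2 - eta * sqrt (xA * xB)}"
  have mono: "strict_mono_on S (vA xA xB)"
    unfolding S_def using strict_mono_on_vA assms by simp
  have "{..1} \<subseteq> S"
    using atMost_1_subset_vA_domain[OF assms] unfolding S_def .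
  then have S1: "1 \<in> S" and sub: "{..<1} \<subseteq> S"
    by auto
  have "vA xA xB ` {..<1} \<subseteq> {..<sqrt (2 / xA)}"
    using strict_mono_onD[OF mono _ S1] sub vA_one[OF assms] by auto
  moreover have "{..<sqrt (2 / xA)} \<subseteq> vA xA xB ` {..<1}"
    using vA_surj[OF assms] by (metis image_eqI lessThan_iff subsetI)
  moreover have "inj_on (vA xA xB) {..<1}"
    using strict_mono_on_imp_inj_on[OF monotone_on_subset[OF mono sub]] .
  ultimately show ?thesis
    unfolding bij_betw_def by blast
qed

section \<open>Both problems in the variable z\<close>

lemma mult_kepler_quad_sqrt_ratio:
  assumes "0 < x" "0 < y"
  shows "x * kepler_quad eta (sqrt (y / x)) = x + y - 2 * eta * sqrt (x * y)"
proof -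
  have "x * sqrt (y / x) = sqrt (x * y)"
    using assms by (simp add: real_sqrt_divide real_sqrt_mult field_simps)
  moreover have "x * (sqrt (y / x))^2 = y"
    using assms by simp
  ultimately show ?thesis
    unfolding kepler_quad_def by (simp add: algebra_simps)
qed

lemma vA_kepler_parameters:
  assumes "0 < xB" "xB < xA" "eta < 1"
  defines "t0 \<equiv> sqrt (xB / xA)" and "P \<equiv> (xA + xB) / 2 - eta * sqrt (xA * xB)"
  shows "0 < t0" "t0 < 1" "0 < P"
    and "xA = 2 * P / kepler_quad eta t0" "xB = 2 * P / kepler_quad eta (1 / t0)"
    and "vA xA xB eta = (eta - t0) / sqrt P"
proof -
  show t0: "0 < t0" "t0 < 1"
    unfolding t0_def using assms by simp_all
  have "1 / t0 = sqrt (xA / xB)"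
    unfolding t0_def by (simp add: real_sqrt_divide)
  then have QA: "xA * kepler_quad eta t0 = 2 * P" and QB: "xB * kepler_quad eta (1 / t0) = 2 * P"
    unfolding t0_def P_def using mult_kepler_quad_sqrt_ratio[of xA xB eta]
      mult_kepler_quad_sqrt_ratio[of xB xA eta] assms(1,2)
    by (simp_all add: mult.commute)
  have "0 < kepler_quad eta t0" "0 < kepler_quad eta (1 / t0)"
    using kepler_quad_pos[OF assms(3)] t0 by simp_all
  moreover have "0 < xA"
    using assms(1,2) by simp
  ultimately have "0 < xA * kepler_quad eta t0"
    by simp
  then show "0 < P"
    using QA by simp
  show "xA = 2 * P / kepler_quad eta t0" "xB = 2 * P / kepler_quad eta (1 / t0)"
    using QA QB \<open>0 < kepler_quad eta t0\<close> \<open>0 < kepler_quad eta (1 / t0)\<close>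
    by (simp_all add: field_simps)
  show "vA xA xB eta = (eta - t0) / sqrt P"
    unfolding vA_def t0_def P_def ..
qed

lemma TDR_vA_eq_integral:
  assumes "0 < xB" "xB < xA" "eta < 1"
  shows "TDR xA xB (vA xA xB eta) = integral {sqrt (xB / xA)..1 / sqrt (xB / xA)}
     (kepler_rate ((xA + xB) / 2 - eta * sqrt (xA * xB)) eta)"
proof -
  define t0 where "t0 = sqrt (xB / xA)"
  define P where "P = (xA + xB) / 2 - eta * sqrt (xA * xB)"
  note par = vA_kepler_parameters[OF assms, folded t0_def P_def]
  have "1 < 1 / t0"
    using par(1,2) by (simp add: field_simps)
  moreover have "2 \<le> t0 + 1 / t0"
    using par(1) sum_squares_ge_zero[of "t0 - 1" 0] by (simp add: field_simps power2_eq_square)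
  ultimately have "t0 < 1 / t0" "2 * eta < t0 + 1 / t0"
    using par(2) assms(3) by linarith+
  then interpret kepler_arc P eta t0 "1 / t0"
    using par(1,3) assms(3) by unfold_locales
  have "TDR xA xB (vA xA xB eta) = integral {t0..1 / t0} (kepler_rate P eta)"
    using TDR_eq_integral unfolding par(4-6)[symmetric] .
  then show ?thesis
    unfolding t0_def P_def .
qed

lemma HR_vA:
  assumes "0 < xB" "xB < xA" "eta < 1"
  shows "HR xA (vA xA xB eta) = (eta^2 - 1) / (2 * ((xA + xB) / 2 - eta * sqrt (xA * xB)))"
proof -
  define t0 where "t0 = sqrt (xB / xA)"
  define P where "P = (xA + xB) / 2 - eta * sqrt (xA * xB)"
  note par = vA_kepler_parameters[OF assms, folded t0_def P_def]
  have "0 < kepler_quad eta t0"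
    using kepler_quad_pos[OF assms(3)] par(1) by simp
  then have "kepler_quad eta t0 = 2 * P / xA"
    using par(3,4) by simp
  then have "HR xA (vA xA xB eta) = (eta^2 - 1) / (2 * P)"
    unfolding par(6) using HR_kepler_iff[OF par(3)] by blast
  then show ?thesis
    unfolding P_def .
qed

lemma half_angle_endpoints:
  assumes "0 < rA" "0 < thA" "thA < pi / 2"
    and "xA + xB = 2 * rA" "xA - xB = 2 * rA * cos thA"
  shows "0 < xB" "xB < xA" "sqrt (xB / xA) = tan (thA / 2)" "sqrt (xA * xB) = rA * sin thA"
proof -
  have c: "0 < cos thA" "cos thA < 1" and s: "0 < sin thA"
    using assms(2,3) cos_monotone_0_pi[of 0 thA] by (auto intro: cos_gt_zero_pi sin_gt_zero)
  have xA: "xA = rA * (1 + cos thA)" and xB: "xB = rA * (1 - cos thA)"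
    using assms(4,5) by (simp_all add: algebra_simps)
  show "0 < xB" "xB < xA"
    unfolding xA xB using assms(1) c by simp_all
  have sc: "(sin thA)^2 = (1 - cos thA) * (1 + cos thA)"
    by (simp add: sin_squared_eq algebra_simps power2_eq_square)
  have "xB / xA = (sin thA / (1 + cos thA))^2"
    unfolding xA xB power_divide sc using assms(1) c by (simp add: power2_eq_square)
  moreover have "tan (thA / 2) = sin thA / (1 + cos thA)"
    using tan_half[of "thA / 2"] by (simp add: add.commute)
  ultimately show "sqrt (xB / xA) = tan (thA / 2)"
    using s c by simp
  have "xA * xB = (rA * sin thA)^2"
    unfolding xA xB power_mult_distrib sc by (simp add: power2_eq_square)
  then show "sqrt (xA * xB) = rA * sin thA"
    using assms(1) s by simp
qed

theorem proposition3:
  fixes rA thA xA xB :: real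
  assumes "0 < rA" and "0 < thA" and "thA < pi / 2"
    and "xA + xB = 2 * rA" and "xA - xB = 2 * rA * cos thA"
  shows "bij_betw (vA xA xB) {..<1} {..<sqrt (2 / xA)} \<and>
    (\<forall>eta < 1. TDS rA thA eta = TDR xA xB (vA xA xB eta) \<and>
               HS rA thA eta = HR xA (vA xA xB eta))"
proof -
  note sides = half_angle_endpoints[OF assms]
  have "TDS rA thA eta = TDR xA xB (vA xA xB eta) \<and> HS rA thA eta = HR xA (vA xA xB eta)"
    if "eta < 1" for eta
  proof -
    have P: "rA * (1 - eta * sin thA) = (xA + xB) / 2 - eta * sqrt (xA * xB)"
      using assms(4) sides(4) by (simp add: algebra_simps)
    have "HS rA thA eta = (eta^2 - 1) / (2 * ((xA + xB) / 2 - eta * sqrt (xA * xB)))"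
      unfolding HS_def P[symmetric] by (simp add: mult.assoc)
    then show ?thesis
      using TDS_eq_integral_kepler_rate[OF assms(1-3) that] TDR_vA_eq_integral[OF sides(1,2) that]
        HR_vA[OF sides(1,2) that]
      unfolding P sides(3) by simp
  qed
  with bij_betw_vA[OF sides(1,2)] show ?thesis
    by blast
qed

end
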